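(* Let $X_1,\dots,X_n$ be statistically compact topological spaces. Then the product space $\prod_{i=1}^n X_i$ is statistically compact.
   Context: For $A\subseteq\mathbb{N}$ let $d_n(A)=|A\cap\{1,\dots,n\}|/n$, $\overline{d}(A)=\limsup_n d_n(A)$, $\underline{d}(A)=\liminf_n d_n(A)$, and $d(A)$ their common value when equal. A sequence in $X$ is a map from an infinite subset $M\subseteq\mathbb{N}$ into $X$, written $(x_n)_{n\in M}$; a subsequence is $(x_n)_{n\in N}$ with $N\subseteq M$ infinite. It is nonthin if $\overline{d}(M)>0$. A nonthin sequence $(x_n)_{n\in M}$ is statistically convergent to $a\in X$ if for every open $U\ni a$, $d(\{n\in M:x_n\notin U\})=0$. A topological space is statistically compact if every nonthin sequence in it has a nonthin subsequence that is statistically convergent to some point of the space. *)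

theory Defs
  imports "HOL-Analysis.Analysis"
begin

text \<open>Natural numbers of the paper are the positive integers; d_n(A) = |A \<inter> {1..n}| / n.\<close>

definition dens_n :: "nat set \<Rightarrow> nat \<Rightarrow> real" where
  "dens_n A n = real (card (A \<inter> {1..n})) / real n"

definition upper_density :: "nat set \<Rightarrow> ereal" where
  "upper_density A = limsup (\<lambda>n. ereal (dens_n A n))"

definition has_density :: "nat set \<Rightarrow> real \<Rightarrow> bool" where
  "has_density A a \<longleftrightarrow> (\<lambda>n. dens_n A n) \<longlonglongrightarrow> a"

definition nonthin :: "nat set \<Rightarrow> bool" where
  "nonthin M \<longleftrightarrow> upper_density M > 0"

definition is_seq_in :: "'a topology \<Rightarrow> nat set \<Rightarrow> (nat \<Rightarrow> 'a) \<Rightarrow> bool" where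
  "is_seq_in X M x \<longleftrightarrow> M \<subseteq> {1..} \<and> infinite M \<and> (\<forall>n\<in>M. x n \<in> topspace X)"

definition stat_converges :: "'a topology \<Rightarrow> nat set \<Rightarrow> (nat \<Rightarrow> 'a) \<Rightarrow> 'a \<Rightarrow> bool" where
  "stat_converges X M x a \<longleftrightarrow> nonthin M \<and> a \<in> topspace X \<and>
     (\<forall>U. openin X U \<and> a \<in> U \<longrightarrow> has_density {n\<in>M. x n \<notin> U} 0)"

definition stat_compact :: "'a topology \<Rightarrow> bool" where
  "stat_compact X \<longleftrightarrow> (\<forall>M x. is_seq_in X M x \<and> nonthin M \<longrightarrow>
     (\<exists>N. N \<subseteq> M \<and> infinite N \<and> nonthin N \<and> (\<exists>a\<in>topspace X. stat_converges X N x a)))"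

end

theory Submission
  imports Defs
begin

text \<open>Refine a nonthin sequence one coordinate at a time: statistical convergence passes to
  nonthin subsequences, so after finitely many refinements every coordinate converges
  statistically along the same nonthin index set. A basic open box around the limit is
  missed only on the finite union of the coordinatewise exceptional sets, and a finite union
  of sets of density zero has density zero.\<close>

lemma dens_n_mono: "A \<subseteq> B \<Longrightarrow> dens_n A n \<le> dens_n B n"
  unfolding dens_n_def by (intro divide_right_mono) (auto intro!: card_mono)

lemma dens_n_Un_le: "dens_n (A \<union> B) n \<le> dens_n A n + dens_n B n"
proof -
  have "card ((A \<union> B) \<inter> {1..n}) \<le> card (A \<inter> {1..n}) + card (B \<inter> {1..n})"
    by (metis Int_Un_distrib2 card_Un_le)
  then show ?thesis
    unfolding dens_n_def by (simp add: add_divide_distrib[symmetric] divide_right_mono)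
qed

lemma has_density_0_dominated:
  assumes "(\<lambda>n. f n) \<longlonglongrightarrow> 0" "\<And>n. dens_n A n \<le> f n"
  shows "has_density A 0"
  unfolding has_density_def
  by (rule tendsto_sandwich[of "\<lambda>_. 0" _ _ f]) (use assms in \<open>auto simp: dens_n_def\<close>)

lemma has_density_0_subset:
  "has_density B 0 \<Longrightarrow> A \<subseteq> B \<Longrightarrow> has_density A 0"
  by (rule has_density_0_dominated[of "dens_n B"]) (auto simp: has_density_def dens_n_mono)

lemma has_density_0_Un:
  assumes "has_density A 0" "has_density B 0"
  shows "has_density (A \<union> B) 0"
proof (rule has_density_0_dominated)
  show "(\<lambda>n. dens_n A n + dens_n B n) \<longlonglongrightarrow> 0"
    using tendsto_add[of "dens_n A" 0 _ "dens_n B" 0] assms by (simp add: has_density_def)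
qed (rule dens_n_Un_le)

lemma has_density_0_UN:
  assumes "finite I" "\<And>i. i \<in> I \<Longrightarrow> has_density (A i) 0"
  shows "has_density (\<Union>i\<in>I. A i) 0"
  using assms
proof (induction I rule: finite_induct)
  case empty
  show ?case by (simp add: has_density_def dens_n_def)
qed (simp add: has_density_0_Un)

lemma stat_converges_subset:
  assumes "stat_converges X N x a" "N' \<subseteq> N" "nonthin N'"
  shows "stat_converges X N' x a"
  unfolding stat_converges_def
proof (intro conjI allI impI)
  fix U assume "openin X U \<and> a \<in> U"
  then have "has_density {n \<in> N. x n \<notin> U} 0"
    using assms(1) unfolding stat_converges_def by blast
  then show "has_density {n \<in> N'. x n \<notin> U} 0"
    by (rule has_density_0_subset) (use assms(2) in blast)
qed (use assms in \<open>auto simp: stat_converges_def\<close>)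

lemma stat_compact_common_subseq:
  assumes "finite I" "\<And>i. i \<in> I \<Longrightarrow> stat_compact (X i)"
    and M: "M \<subseteq> {1..}" "infinite M" "nonthin M"
    and x: "\<And>m i. m \<in> M \<Longrightarrow> i \<in> I \<Longrightarrow> x m i \<in> topspace (X i)"
  shows "\<exists>N\<subseteq>M. infinite N \<and> nonthin N \<and>
           (\<forall>i\<in>I. \<exists>a. stat_converges (X i) N (\<lambda>m. x m i) a)"
  using assms(1,2) x
proof (induction I rule: finite_induct)
  case empty
  show ?case using M by blast
next
  case (insert j I)
  then obtain N where N: "N \<subseteq> M" "infinite N" "nonthin N"
    and conv: "\<forall>i\<in>I. \<exists>a. stat_converges (X i) N (\<lambda>m. x m i) a"
    by auto
  have "is_seq_in (X j) N (\<lambda>m. x m j)"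
    unfolding is_seq_in_def using N(1,2) M(1) insert.prems(2) by auto
  moreover have "stat_compact (X j)"
    using insert.prems(1) by simp
  ultimately obtain N' a where N': "N' \<subseteq> N" "infinite N'" "nonthin N'"
    and "stat_converges (X j) N' (\<lambda>m. x m j) a"
    using N(3) unfolding stat_compact_def by blast
  moreover have "\<forall>i\<in>I. \<exists>a. stat_converges (X i) N' (\<lambda>m. x m i) a"
    using conv by (metis stat_converges_subset N'(1,3))
  ultimately show ?case using N(1) by blast
qed

lemma stat_converges_product_topology:
  assumes "finite I" "nonthin N"
    and x: "\<And>m. m \<in> N \<Longrightarrow> x m \<in> extensional I"
    and conv: "\<And>i. i \<in> I \<Longrightarrow> stat_converges (X i) N (\<lambda>m. x m i) (a i)"
  shows "stat_converges (product_topology X I) N x (restrict a I)"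
  unfolding stat_converges_def
proof (intro conjI allI impI)
  have "a i \<in> topspace (X i)" if "i \<in> I" for i
    using conv[OF that] unfolding stat_converges_def by blast
  then show "restrict a I \<in> topspace (product_topology X I)"
    by simp
  fix U assume "openin (product_topology X I) U \<and> restrict a I \<in> U"
  then obtain V where V: "\<forall>i\<in>I. openin (X i) (V i)"
    and aV: "restrict a I \<in> Pi\<^sub>E I V" and VU: "Pi\<^sub>E I V \<subseteq> U"
    unfolding openin_product_topology_alt by blast
  have "has_density (\<Union>i\<in>I. {m\<in>N. x m i \<notin> V i}) 0"
  proof (rule has_density_0_UN[OF \<open>finite I\<close>])
    fix i assume i: "i \<in> I"
    then have "a i \<in> V i"
      using aV by auto
    then show "has_density {m\<in>N. x m i \<notin> V i} 0"
      using conv[OF i] V i unfolding stat_converges_def by blast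
  qed
  moreover have "{m\<in>N. x m \<notin> U} \<subseteq> (\<Union>i\<in>I. {m\<in>N. x m i \<notin> V i})"
  proof
    fix m assume m: "m \<in> {m\<in>N. x m \<notin> U}"
    then have "x m \<notin> Pi\<^sub>E I V" using VU by blast
    then show "m \<in> (\<Union>i\<in>I. {m\<in>N. x m i \<notin> V i})"
      using m x by (auto simp: PiE_iff)
  qed
  ultimately show "has_density {m\<in>N. x m \<notin> U} 0"
    by (rule has_density_0_subset)
qed (fact \<open>nonthin N\<close>)

theorem stat_compact_product_topology:
  assumes "finite I" "\<And>i. i \<in> I \<Longrightarrow> stat_compact (X i)"
  shows "stat_compact (product_topology X I)"
  unfolding stat_compact_def
proof (intro allI impI)
  fix M x
  assume "is_seq_in (product_topology X I) M x \<and> nonthin M"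
  then have M: "M \<subseteq> {1..}" "infinite M" "nonthin M"
    and x: "\<And>m. m \<in> M \<Longrightarrow> x m \<in> (\<Pi>\<^sub>E i\<in>I. topspace (X i))"
    unfolding is_seq_in_def by auto
  have "\<And>m i. m \<in> M \<Longrightarrow> i \<in> I \<Longrightarrow> x m i \<in> topspace (X i)"
    using x by (simp add: PiE_iff)
  then obtain N where N: "N \<subseteq> M" "infinite N" "nonthin N"
    and "\<forall>i\<in>I. \<exists>a. stat_converges (X i) N (\<lambda>m. x m i) a"
    using stat_compact_common_subseq[OF assms(1) _ M, of X x] assms(2) by blast
  then obtain a where "\<And>i. i \<in> I \<Longrightarrow> stat_converges (X i) N (\<lambda>m. x m i) (a i)"
    by metis
  moreover have "\<And>m. m \<in> N \<Longrightarrow> x m \<in> extensional I"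
    using x N(1) by (auto simp: PiE_iff)
  ultimately have conv: "stat_converges (product_topology X I) N x (restrict a I)"
    by (intro stat_converges_product_topology[OF \<open>finite I\<close> N(3)])
  moreover have "restrict a I \<in> topspace (product_topology X I)"
    using conv unfolding stat_converges_def by blast
  ultimately show "\<exists>N'\<subseteq>M. infinite N' \<and> nonthin N' \<and>
      (\<exists>a\<in>topspace (product_topology X I). stat_converges (product_topology X I) N' x a)"
    using N by blast
qed

theorem mainTheorem13:
  fixes X :: "nat \<Rightarrow> 'a topology" and n :: nat
  assumes "\<And>i. i \<in> {1..n} \<Longrightarrow> stat_compact (X i)"
  shows "stat_compact (product_topology X {1..n})"
  using assms by (intro stat_compact_product_topology finite_atLeastAtMost)

end
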